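(* For $n\ge2$, the map $T_n$ restricts to a surjective map $T_n:X_n\setminus U_{12}\to\mathbb{C}^{3n-3}\setminus Z_{12}$.
   Context: $X_n=SL(2,\mathbb{C})^{\times n}$. The Magnus trace map $T_n:X_n\to\mathbb{C}^{3n-3}$ is $T_n(A_1,\dots,A_n)=(t_1,t_2,t_{12},t_3,t_{13},t_{23},\dots,t_n,t_{1n},t_{2n})$, with $t_j=\mathsf{tr}(A_j)$, $t_{jk}=\mathsf{tr}(A_jA_k)$ (for $n=2$ this is $(t_1,t_2,t_{12})$). Writing points of $\mathbb{C}^{3n-3}$ as $\mathbf{z}=(z_1,z_2,z_{12},\dots,z_n,z_{1n},z_{2n})$, set $\sigma_{12}(\mathbf{z})=z_1^2+z_2^2+z_{12}^2-z_1z_2z_{12}-4$, $Z_{12}=\{\mathbf{z}:\sigma_{12}(\mathbf{z})=0\}$ and $U_{12}=\{A\in X_n: t_1^2+t_2^2+t_{12}^2-t_1t_2t_{12}-4=0\}$ (equivalently $\mathsf{tr}(A_1A_2A_1^{-1}A_2^{-1})=2$). *)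

theory Defs
  imports "HOL-Analysis.Analysis"
begin

text \<open>Points of X_n = SL(2,C)^n are lists As of length n of 2x2 complex matrices
  of determinant 1; the matrix A_j of the paper is As ! (j - 1).\<close>

type_synonym mat2 = "complex^2^2"

definition X :: "nat \<Rightarrow> mat2 list set" where
  "X n = {As. length As = n \<and> (\<forall>A\<in>set As. det A = 1)}"

definition magnus_trace :: "nat \<Rightarrow> mat2 list \<Rightarrow> complex list" where
  "magnus_trace n As =
     [trace (As!0), trace (As!1), trace (As!0 ** As!1)] @
     concat (map (\<lambda>j. [trace (As!j), trace (As!0 ** As!j), trace (As!1 ** As!j)]) [2..<n])"

definition sigma12 :: "complex list \<Rightarrow> complex" where
  "sigma12 z = (z!0)^2 + (z!1)^2 + (z!2)^2 - z!0 * z!1 * z!2 - 4"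

definition Z12 :: "nat \<Rightarrow> complex list set" where
  "Z12 n = {z. length z = 3*n - 3 \<and> sigma12 z = 0}"

definition U12 :: "nat \<Rightarrow> mat2 list set" where
  "U12 n = {As \<in> X n. let t1 = trace (As!0); t2 = trace (As!1); t12 = trace (As!0 ** As!1)
                       in t1^2 + t2^2 + t12^2 - t1*t2*t12 - 4 = 0}"

end

theory Submission
  imports Defs
begin

(* Any pair A_1, A_2 in SL(2,C) with traces (z_1, z_2, z_12) can serve as the first two
   matrices; each further A_j then only has to realise the triple (tr A_j, tr A_1A_j, tr A_2A_j).
   For the trace form, the Gram matrix of I, A_1, A_2 has determinant -2 sigma with
   sigma = sigma_12(z) nonzero, so these linear conditions are met by some M_0 in the span of
   I, A_1, A_2. The commutator K = A_1A_2 - A_2A_1 is trace-orthogonal to this span and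
   det K = -sigma, so det (M_0 + s K) = det M_0 - sigma s^2, which is 1 for a suitable s. *)

lemma trace_mat_mult: "trace (mat c ** M) = c * trace (M :: 'a::comm_semiring_1^'n^'n)"
  by (simp add: trace_def matrix_matrix_mult_def mat_def if_distrib if_distribR sum.delta'
      sum_distrib_left cong: if_cong)

lemma mat_mult_commute: "mat c ** M = M ** (mat c :: 'a::comm_semiring_1^'n^'n)"
  by (simp add: matrix_matrix_mult_def mat_def vec_eq_iff if_distrib if_distribR sum.delta'
      mult.commute cong: if_cong)

lemma matrix_mult_mat_left_commute:
  "M ** (mat c ** N) = mat c ** (M ** (N :: 'a::comm_semiring_1^'n^'n))"
  by (metis mat_mult_commute matrix_mul_assoc)

lemma matrix_diff_ldistrib: "A ** (B - C) = A ** B - A ** (C :: 'a::ring_1^'n^'m)"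
  by (simp add: matrix_matrix_mult_def vec_eq_iff sum_subtractf right_diff_distrib)

lemma trace_cyclic: "trace (A ** (B ** C)) = trace (C ** (A ** B :: 'a::comm_semiring_1^'n^'n))"
  by (metis matrix_mul_assoc trace_mul_sym)

definition mat2x2 :: "complex \<Rightarrow> complex \<Rightarrow> complex \<Rightarrow> complex \<Rightarrow> mat2" where
  "mat2x2 a b c d = vector [vector [a, b], vector [c, d]]"

lemma mat2x2_nth [simp]:
  "mat2x2 a b c d $ 1 $ 1 = a" "mat2x2 a b c d $ 1 $ 2 = b"
  "mat2x2 a b c d $ 2 $ 1 = c" "mat2x2 a b c d $ 2 $ 2 = d"
  by (simp_all add: mat2x2_def)

lemma mat2x2_entries: "M = mat2x2 (M$1$1) (M$1$2) (M$2$1) (M$2$2)"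
  by (simp add: vec_eq_iff forall_2)

lemma det_mat2x2 [simp]: "det (mat2x2 a b c d) = a*d - b*c"
  by (simp add: det_2)

lemma trace_mat2x2 [simp]: "trace (mat2x2 a b c d) = a + d"
  by (simp add: trace_def sum_2)

lemma mat2x2_mult [simp]:
  "mat2x2 a b c d ** mat2x2 e f g h = mat2x2 (a*e + b*g) (a*f + b*h) (c*e + d*g) (c*f + d*h)"
  by (simp add: matrix_matrix_mult_def vec_eq_iff forall_2 sum_2)

lemma mat2x2_add [simp]:
  "mat2x2 a b c d + mat2x2 e f g h = mat2x2 (a + e) (b + f) (c + g) (d + h)"
  by (simp add: vec_eq_iff forall_2)

lemma mat2x2_diff [simp]:
  "mat2x2 a b c d - mat2x2 e f g h = mat2x2 (a - e) (b - f) (c - g) (d - h)"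
  by (simp add: vec_eq_iff forall_2)

lemma mat_eq_mat2x2: "(mat s :: mat2) = mat2x2 s 0 0 s"
  by (simp add: vec_eq_iff forall_2 mat_def)

lemma trace_mat2 [simp]: "trace (mat c :: mat2) = 2 * c"
  by (simp add: mat_eq_mat2x2)

lemma trace_square: "trace (A ** A) = (trace A)^2 - 2 * det (A :: mat2)"
proof -
  obtain a b c d where "A = mat2x2 a b c d"
    by (metis mat2x2_entries)
  then show ?thesis by (simp add: power2_eq_square algebra_simps)
qed

lemma det_add_scaled:
  "det (M + mat s ** K) = det M + s * (trace M * trace K - trace (M ** K)) + s^2 * det (K :: mat2)"
proof -
  obtain a b c d e f g h where "M = mat2x2 a b c d" "K = mat2x2 e f g h"
    by (metis mat2x2_entries)
  then show ?thesis by (simp add: mat_eq_mat2x2 power2_eq_square algebra_simps)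
qed

definition fricke :: "complex \<Rightarrow> complex \<Rightarrow> complex \<Rightarrow> complex" where
  "fricke x y z = x^2 + y^2 + z^2 - x*y*z - 4"

lemma det_commutator:
  fixes A B :: mat2
  shows "det (A ** B - B ** A) = - (det B * (trace A)^2 + det A * (trace B)^2 + (trace (A ** B))^2
     - trace A * trace B * trace (A ** B) - 4 * det A * det B)"
proof -
  obtain a b c d e f g h where "A = mat2x2 a b c d" "B = mat2x2 e f g h"
    by (metis mat2x2_entries)
  then show ?thesis by (simp add: power2_eq_square algebra_simps)
qed

lemma trace_gram_system_solvable:
  fixes a b c t u v :: complex
  assumes "fricke a b c \<noteq> 0"
  shows "\<exists>\<alpha> \<beta> \<gamma>. 2*\<alpha> + a*\<beta> + b*\<gamma> = t \<and> a*\<alpha> + (a^2 - 2)*\<beta> + c*\<gamma> = u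
    \<and> b*\<alpha> + c*\<beta> + (b^2 - 2)*\<gamma> = v"
proof -
  define G :: "complex^3^3" where
    "G = vector [vector [2, a, b], vector [a, a^2 - 2, c], vector [b, c, b^2 - 2]]"
  have "det G = -2 * fricke a b c"
    by (simp add: G_def det_3 fricke_def algebra_simps power2_eq_square)
  with assms have "invertible G"
    by (simp add: invertible_det_nz)
  then obtain H where GH: "G ** H = mat 1"
    by (auto simp: invertible_def)
  define x where "x = H *v vector [t, u, v]"
  have "G *v x = vector [t, u, v]"
    by (simp add: x_def matrix_vector_mul_assoc GH)
  then have "2*x$1 + a*x$2 + b*x$3 = t \<and> a*x$1 + (a^2 - 2)*x$2 + c*x$3 = u
      \<and> b*x$1 + c*x$2 + (b^2 - 2)*x$3 = v"
    by (simp add: G_def vec_eq_iff forall_3 matrix_vector_mult_def sum_3 mult.commute)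
  then show ?thesis
    by blast
qed

lemma exists_sl2_with_traces:
  fixes A B :: mat2
  assumes det_A: "det A = 1" and det_B: "det B = 1"
    and nondeg: "fricke (trace A) (trace B) (trace (A ** B)) \<noteq> 0"
  shows "\<exists>M. det M = 1 \<and> trace M = t \<and> trace (A ** M) = u \<and> trace (B ** M) = v"
proof -
  let ?\<sigma> = "fricke (trace A) (trace B) (trace (A ** B))"
  obtain \<alpha> \<beta> \<gamma> where gram:
      "2*\<alpha> + trace A*\<beta> + trace B*\<gamma> = t"
      "trace A*\<alpha> + ((trace A)^2 - 2)*\<beta> + trace (A ** B)*\<gamma> = u"
      "trace B*\<alpha> + trace (A ** B)*\<beta> + ((trace B)^2 - 2)*\<gamma> = v"
    using trace_gram_system_solvable[OF nondeg] by blast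
  define M0 where "M0 = mat \<alpha> + mat \<beta> ** A + mat \<gamma> ** B"
  define K where "K = A ** B - B ** A"
  have tr_squares: "trace (A ** A) = (trace A)^2 - 2" "trace (B ** B) = (trace B)^2 - 2"
    using det_A det_B by (simp_all add: trace_square)
  have tr_BA: "trace (B ** A) = trace (A ** B)"
    by (rule trace_mul_sym)
  have tr_M0: "trace M0 = t" "trace (A ** M0) = u" "trace (B ** M0) = v"
    using gram
    by (simp_all add: M0_def trace_add matrix_add_ldistrib matrix_mult_mat_left_commute
        trace_mat_mult mat_mult_commute[symmetric] tr_squares tr_BA algebra_simps)
  have tr_K: "trace K = 0" "trace (A ** K) = 0" "trace (B ** K) = 0"
    using trace_cyclic[of A B A] trace_cyclic[of B A B]
    by (simp_all add: K_def trace_sub matrix_diff_ldistrib trace_mul_sym[of A B])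
  have "trace (K ** M0) = 0"
    using tr_K
    by (simp add: M0_def matrix_add_ldistrib trace_add matrix_mult_mat_left_commute
        trace_mat_mult mat_mult_commute[symmetric] trace_mul_sym[of K A] trace_mul_sym[of K B])
  then have tr_M0_K: "trace (M0 ** K) = 0"
    by (metis trace_mul_sym)
  have det_K: "det K = - ?\<sigma>"
    using det_A det_B by (simp add: K_def det_commutator fricke_def)
  define s where "s = csqrt ((det M0 - 1) / ?\<sigma>)"
  have "s^2 * ?\<sigma> = det M0 - 1"
    using nondeg by (simp add: s_def)
  then have "det (M0 + mat s ** K) = 1"
    using tr_K tr_M0_K det_K by (simp add: det_add_scaled algebra_simps)
  moreover have "trace (M0 + mat s ** K) = t" "trace (A ** (M0 + mat s ** K)) = u"
      "trace (B ** (M0 + mat s ** K)) = v"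
    using tr_M0 tr_K
    by (simp_all add: trace_add matrix_add_ldistrib matrix_mult_mat_left_commute trace_mat_mult)
  ultimately show ?thesis
    by blast
qed

lemma exists_sl2_pair_with_traces:
  "\<exists>A B :: mat2. det A = 1 \<and> det B = 1 \<and> trace A = a \<and> trace B = b \<and> trace (A ** B) = c"
proof -
  define r where "r = (c + csqrt (c^2 - 4)) / 2"
  define q where "q = r - c"
  have "2*r - c = csqrt (c^2 - 4)"
    by (simp add: r_def field_simps)
  then have "(2*r - c)^2 = c^2 - 4"
    by simp
  then have "4 * (q * r + 1) = 0"
    by (simp add: q_def power2_eq_square algebra_simps)
  then have "q * r + 1 = 0"
    by (metis mult_eq_0_iff zero_neq_numeral)
  then have "q * r = -1"
    by (simp add: eq_neg_iff_add_eq_0)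
  then have "det (mat2x2 0 q r b) = 1" "trace (mat2x2 a 1 (-1) 0 ** mat2x2 0 q r b) = c"
    by (simp_all add: q_def)
  then show ?thesis
    by (intro exI[of _ "mat2x2 a 1 (-1) 0"] exI[of _ "mat2x2 0 q r b"]) simp
qed

lemma drop_eq_last_three: "length xs = k + 3 \<Longrightarrow> drop k xs = [xs!k, xs!(k+1), xs!(k+2)]"
  by (simp add: Cons_nth_drop_Suc[symmetric])

lemma concat_triples_eq:
  "length z = 3*n - 3 \<Longrightarrow> concat (map (\<lambda>j. [z!(3*j-3), z!(3*j-2), z!(3*j-1)]) [1..<n]) = z"
proof (induction n arbitrary: z)
  case 0
  then show ?case by simp
next
  case (Suc m)
  show ?case
  proof (cases "m = 0")
    case True
    with Suc.prems show ?thesis by simp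
  next
    case False
    define ys where "ys = take (3*m - 3) z"
    have len_ys: "length ys = 3*m - 3"
      using Suc.prems by (simp add: ys_def)
    have "concat (map (\<lambda>j. [z!(3*j-3), z!(3*j-2), z!(3*j-1)]) [1..<m])
        = concat (map (\<lambda>j. [ys!(3*j-3), ys!(3*j-2), ys!(3*j-1)]) [1..<m])"
      by (rule arg_cong[where f = concat], rule map_cong) (auto simp: ys_def)
    also have "\<dots> = ys"
      using Suc.IH[OF len_ys] .
    finally have "concat (map (\<lambda>j. [z!(3*j-3), z!(3*j-2), z!(3*j-1)]) [1..<Suc m])
        = ys @ [z!(3*m-3), z!(3*m-2), z!(3*m-1)]"
      using False by simp
    also have "[z!(3*m-3), z!(3*m-2), z!(3*m-1)] = drop (3*m - 3) z"
    proof -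
      have "3*m - 2 = (3*m - 3) + 1" "3*m - 1 = (3*m - 3) + 2"
        using False by simp_all
      then show ?thesis
        using drop_eq_last_three[of z "3*m - 3"] Suc.prems False by simp
    qed
    finally show ?thesis
      by (simp add: ys_def)
  qed
qed

lemma length_magnus_trace: "2 \<le> n \<Longrightarrow> length (magnus_trace n As) = 3*n - 3"
  by (simp add: magnus_trace_def length_concat comp_def sum_list_triv)

lemma sigma12_magnus_trace:
  "sigma12 (magnus_trace n As) = fricke (trace (As!0)) (trace (As!1)) (trace (As!0 ** As!1))"
  by (simp add: magnus_trace_def sigma12_def fricke_def)

lemma U12_eq_sigma12_zero: "U12 n = {As \<in> X n. sigma12 (magnus_trace n As) = 0}"
  by (simp add: U12_def sigma12_magnus_trace fricke_def Let_def)

lemma magnus_trace_extend: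
  "magnus_trace n ([A, B] @ map F [2..<n]) =
     [trace A, trace B, trace (A ** B)] @
     concat (map (\<lambda>j. [trace (F j), trace (A ** F j), trace (B ** F j)]) [2..<n])"
proof -
  have "([A, B] @ map F [2..<n]) ! j = F j" if "j \<in> set [2..<n]" for j
    using that by (auto simp: nth_append Suc_diff_Suc numeral_2_eq_2)
  then show ?thesis
    unfolding magnus_trace_def by (auto intro!: arg_cong[where f = concat] map_cong)
qed

lemma exists_magnus_trace_preimage:
  assumes "2 \<le> n" and len: "length z = 3*n - 3" and nondeg: "sigma12 z \<noteq> 0"
  shows "\<exists>As \<in> X n. magnus_trace n As = z"
proof -
  obtain A B :: mat2 where AB: "det A = 1" "det B = 1"
    "trace A = z!0" "trace B = z!1" "trace (A ** B) = z!2"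
    using exists_sl2_pair_with_traces[of "z!0" "z!1" "z!2"] by blast
  obtain F where F: "\<And>j. det (F j) = 1 \<and> trace (F j) = z!(3*j-3) \<and>
      trace (A ** F j) = z!(3*j-2) \<and> trace (B ** F j) = z!(3*j-1)"
  proof -
    have "\<forall>j. \<exists>M. det M = 1 \<and> trace M = z!(3*j-3) \<and>
        trace (A ** M) = z!(3*j-2) \<and> trace (B ** M) = z!(3*j-1)"
      using exists_sl2_with_traces[of A B] AB nondeg by (simp add: sigma12_def fricke_def)
    then show ?thesis
      using that by metis
  qed
  define As where "As = [A, B] @ map F [2..<n]"
  have "magnus_trace n As = [z!0, z!1, z!2] @
      concat (map (\<lambda>j. [z!(3*j-3), z!(3*j-2), z!(3*j-1)]) [2..<n])"
    unfolding As_def magnus_trace_extend using AB F by simp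
  also have "\<dots> = concat (map (\<lambda>j. [z!(3*j-3), z!(3*j-2), z!(3*j-1)]) [1..<n])"
    using assms by (simp add: upt_conv_Cons numeral_2_eq_2)
  also have "\<dots> = z"
    using len by (rule concat_triples_eq)
  finally have "magnus_trace n As = z" .
  moreover have "As \<in> X n"
    using assms AB F by (auto simp: As_def X_def)
  ultimately show ?thesis
    by blast
qed

theorem theorem5p4:
  fixes n :: nat
  assumes "n \<ge> 2"
  shows "magnus_trace n ` (X n - U12 n) = {z. length z = 3*n - 3} - Z12 n"
proof
  show "magnus_trace n ` (X n - U12 n) \<subseteq> {z. length z = 3*n - 3} - Z12 n"
    using assms by (auto simp: U12_eq_sigma12_zero Z12_def length_magnus_trace)
  show "{z. length z = 3*n - 3} - Z12 n \<subseteq> magnus_trace n ` (X n - U12 n)"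
  proof
    fix z
    assume z: "z \<in> {z. length z = 3*n - 3} - Z12 n"
    then obtain As where "As \<in> X n" "magnus_trace n As = z"
      using exists_magnus_trace_preimage[OF assms] by (auto simp: Z12_def)
    with z show "z \<in> magnus_trace n ` (X n - U12 n)"
      by (auto simp: U12_eq_sigma12_zero Z12_def)
  qed
qed

end
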